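(* Let $\hbar$ and $\tilde t_1,\tilde t_2,\dots$ be formal parameters, $D=x\frac{\partial}{\partial x}$, and let $$\Psi^{mm}(x,\hbar):=\sum_{j\ge0}s_{(j)}(\tilde{\mathbf t}/\hbar)\,x^j\prod_{l=1}^j\frac{1}{1-\hbar(l-1)}$$ (the first basis vector $\Phi^{mm}_1$ with $\beta=\hbar$ and $\tilde t_k\mapsto\tilde t_k/\hbar$). Then $A_{mm}\Psi^{mm}=0$, where $$A_{mm}:=\sum_{k\ge1}k\tilde t_k\,x^k\prod_{j=0}^{k-1}\frac{1}{1-\hbar(D+j)}-\hbar D$$ (the product of operators in $D$ acts first, then multiplication by $x^k$). If moreover $\tilde t_k=0$ for all $k>l$, then $\tilde A_{mm}\Psi^{mm}=0$ for the polynomial operator $$\tilde A_{mm}=\sum_{k=1}^lk\tilde t_k\hat x^k\prod_{j=1}^{l-k}(1+\hat x\hat y+\hbar j)+\hat x\hat y\prod_{j=1}^l(1+\hat x\hat y+\hbar j),\qquad \hat x=x\cdot,\ \hat y=-\hbar\frac{\partial}{\partial x}.$$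
   Context: $s_{(j)}$ is defined by $\exp(\sum_{m\ge1}t_mx^m)=\sum_{j\ge0}s_{(j)}(\mathbf t)x^j$, and $\tilde{\mathbf t}/\hbar=(\tilde t_1/\hbar,\tilde t_2/\hbar,\dots)$. All expressions are formal power series in $x$ with coefficients formal in $\hbar$ and $\tilde{\mathbf t}$; operators $f(D)$ act on $x^m$ by multiplication by $f(m)$. *)

theory Defs
  imports "HOL-Computational_Algebra.Formal_Power_Series"
          "HOL-Computational_Algebra.Formal_Laurent_Series"
begin

(* Coefficient ring: 'a fls = formal Laurent series in hbar over a field 'a of char 0.
   hbar is the formal variable fls_X; the parameters t~_k are constants fls_const (c k),
   with c k arbitrary elements of 'a (taking 'a = Q(t_1,t_2,...) gives formal t's). *)

definition hbar :: "'a::field_char_0 fls" where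
  "hbar = fls_X"

definition ttil :: "(nat \<Rightarrow> 'a::field_char_0) \<Rightarrow> nat \<Rightarrow> 'a fls" where
  "ttil c k = fls_const (c k)"

definition schur_row :: "(nat \<Rightarrow> 'b::field_char_0) \<Rightarrow> nat \<Rightarrow> 'b" where
  "schur_row t j = (fps_exp 1 oo Abs_fps (\<lambda>m. if m = 0 then 0 else t m)) $ j"

definition Psi_mm :: "(nat \<Rightarrow> 'a::field_char_0) \<Rightarrow> 'a fls fps" where
  "Psi_mm c = Abs_fps (\<lambda>j. schur_row (\<lambda>m. ttil c m / hbar) j *
       (\<Prod>l=1..j. inverse (1 - hbar * of_nat (l - 1))))"

(* f(D) acts on x^m by multiplication by f(m) *)
definition D_op :: "(nat \<Rightarrow> 'b::comm_ring_1) \<Rightarrow> 'b fps \<Rightarrow> 'b fps" where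
  "D_op f F = Abs_fps (\<lambda>m. f m * F $ m)"

definition A_trunc :: "(nat \<Rightarrow> 'a::field_char_0) \<Rightarrow> nat \<Rightarrow> 'a fls fps \<Rightarrow> 'a fls fps" where
  "A_trunc c N F = (\<Sum>k=1..N. fps_const (of_nat k * ttil c k) * fps_X ^ k *
       D_op (\<lambda>m. \<Prod>j<k. inverse (1 - hbar * of_nat (m + j))) F)"

(* the infinite sum over k: the coefficient of x^n only receives terms with k <= n,
   so it equals the coefficient of x^n of the partial sum up to n *)
definition A_mm :: "(nat \<Rightarrow> 'a::field_char_0) \<Rightarrow> 'a fls fps \<Rightarrow> 'a fls fps" where
  "A_mm c F = Abs_fps (\<lambda>n. A_trunc c n F $ n) - fps_const hbar * D_op of_nat F"

definition xhat :: "'a::field_char_0 fls fps \<Rightarrow> 'a fls fps" where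
  "xhat F = fps_X * F"

definition yhat :: "'a::field_char_0 fls fps \<Rightarrow> 'a fls fps" where
  "yhat F = fps_const (- hbar) * fps_deriv F"

definition Bop :: "nat \<Rightarrow> 'a::field_char_0 fls fps \<Rightarrow> 'a fls fps" where
  "Bop j F = F + xhat (yhat F) + fps_const (hbar * of_nat j) * F"

(* operator product prod_{j=1}^n Bop j (the factors commute) *)
definition Bprod :: "nat \<Rightarrow> 'a::field_char_0 fls fps \<Rightarrow> 'a fls fps" where
  "Bprod n = foldr (\<circ>) (map Bop [1..<n+1]) id"

definition Atil_mm :: "(nat \<Rightarrow> 'a::field_char_0) \<Rightarrow> nat \<Rightarrow> 'a fls fps \<Rightarrow> 'a fls fps" where
  "Atil_mm c l F = (\<Sum>k=1..l. fps_const (of_nat k * ttil c k) * (xhat ^^ k) (Bprod (l - k) F))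
                   + xhat (yhat (Bprod l F))"

end

theory Submission
  imports Defs
begin

text \<open>
  Write \<open>\<Psi>\<^sup>m\<^sup>m = \<Sum>\<^sub>n s n * P n * x^n\<close> with \<open>s n = s\<^sub>(\<^sub>n\<^sub>)(t/\<hbar>)\<close> and
  \<open>P n = \<Prod>\<^sub>i\<^sub><\<^sub>n 1/(1 - \<hbar> i)\<close>. Differentiating \<open>E = exp G\<close> gives \<open>x E' = x G' E\<close>, i.e.
  the recurrence \<open>\<hbar> n s n = \<Sum>\<^sub>k k t\<^sub>k s (n - k)\<close>. All operators involved are diagonal
  on monomials up to a shift by \<open>x^k\<close>, and their diagonal factors telescope against
  \<open>P\<close>: the \<open>x^n\<close> coefficient of the \<open>k\<close>-th summand is \<open>W n * k t\<^sub>k s (n - k)\<close> with a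
  weight \<open>W n\<close> independent of \<open>k\<close> (\<open>W n = P n\<close> for \<open>A\<^sub>m\<^sub>m\<close>, and
  \<open>W n = P n * \<Prod>\<^sub>j\<^sub>=\<^sub>1\<^sub>.\<^sub>.\<^sub>l (1 - \<hbar>(n - j))\<close> for \<open>\<tilde>A\<^sub>m\<^sub>m\<close>), while the last term contributes
  \<open>-\<hbar> n s n * W n\<close>. So both coefficients vanish by the recurrence.
\<close>

lemma fps_X_mult_deriv_nth: "(fps_X * fps_deriv F) $ n = of_nat n * (F :: 'a::comm_ring_1 fps) $ n"
  by (cases n) (simp_all add: algebra_simps)

lemma schur_row_recurrence:
  fixes u :: "nat \<Rightarrow> 'a::field_char_0"
  shows "of_nat n * schur_row u n = (\<Sum>k=1..n. of_nat k * u k * schur_row u (n - k))"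
proof -
  define G where "G = Abs_fps (\<lambda>m. if m = 0 then 0 else u m)"
  define E where "E = fps_exp 1 oo G"
  have "fps_deriv E = E * fps_deriv G"
    unfolding E_def using fps_compose_deriv[of G "fps_exp 1"] by (simp add: G_def)
  then have "(fps_X * fps_deriv E) $ n = ((fps_X * fps_deriv G) * E) $ n"
    by (simp add: mult_ac)
  then have "of_nat n * E $ n = (\<Sum>k=0..n. of_nat k * G $ k * E $ (n - k))"
    by (simp only: fps_X_mult_deriv_nth fps_mult_nth[of "fps_X * fps_deriv G" E])
  also have "\<dots> = (\<Sum>k=1..n. of_nat k * u k * E $ (n - k))"
    by (simp add: sum.atLeast_Suc_atMost G_def)
  finally show ?thesis
    by (simp add: schur_row_def E_def G_def)
qed

lemma hbar_neq_0: "(hbar :: 'a::field_char_0 fls) \<noteq> 0"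
  by (simp add: hbar_def)

lemma ttil_schur_row_recurrence:
  fixes c :: "nat \<Rightarrow> 'a::field_char_0"
  defines "s \<equiv> schur_row (\<lambda>m. ttil c m / hbar)"
  shows "(\<Sum>k=1..n. of_nat k * ttil c k * s (n - k)) = hbar * of_nat n * s n"
proof -
  have "(\<Sum>k=1..n. of_nat k * ttil c k * s (n - k))
        = hbar * (\<Sum>k=1..n. of_nat k * (ttil c k / hbar) * s (n - k))"
    by (simp add: sum_distrib_left hbar_neq_0 mult_ac)
  also have "\<dots> = hbar * (of_nat n * s n)"
    by (simp only: s_def schur_row_recurrence)
  finally show ?thesis
    by (simp only: mult.assoc)
qed

lemma one_minus_hbar_of_nat_neq_0: "(1 - hbar * of_nat m :: 'a::field_char_0 fls) \<noteq> 0"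
proof
  assume "1 - hbar * of_nat m = (0 :: 'a fls)"
  moreover have "fls_nth (1 - hbar * of_nat m :: 'a fls) 0 = 1"
    unfolding hbar_def by (simp add: fls_of_nat fls_times_nth(1))
  ultimately show False by simp
qed

definition psi_weight :: "nat \<Rightarrow> 'a::field_char_0 fls" where
  "psi_weight n = (\<Prod>i<n. inverse (1 - hbar * of_nat i))"

lemma Psi_mm_nth: "Psi_mm c $ n = schur_row (\<lambda>m. ttil c m / hbar) n * psi_weight n"
proof -
  have "(\<Prod>l=1..n. inverse (1 - hbar * of_nat (l - 1))) = (psi_weight n :: 'a::field_char_0 fls)"
    unfolding psi_weight_def by (induction n) (simp_all add: prod.cl_ivl_Suc mult_ac)
  then show ?thesis
    by (simp add: Psi_mm_def)
qed

lemma psi_weight_add: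
  "psi_weight m * (\<Prod>j<k. inverse (1 - hbar * of_nat (m + j))) = psi_weight (m + k)"
  by (induction k) (simp_all add: psi_weight_def mult_ac)

lemma A_mm_Psi_mm: "A_mm c (Psi_mm c) = 0"
proof (rule fps_ext)
  fix n
  define s where "s = schur_row (\<lambda>m. ttil c m / hbar)"
  have term_nth: "(fps_const (of_nat k * ttil c k) * fps_X ^ k *
       D_op (\<lambda>m. \<Prod>j<k. inverse (1 - hbar * of_nat (m + j))) (Psi_mm c)) $ n
       = psi_weight n * (of_nat k * ttil c k * s (n - k))" if "k \<in> {1..n}" for k
  proof -
    from that obtain m where n: "n = m + k"
      by (metis atLeastAtMost_iff le_add_diff_inverse2)
    show ?thesis
      by (simp add: n fps_X_power_mult_nth D_op_def Psi_mm_nth s_def psi_weight_add[symmetric] mult_ac)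
  qed
  have "A_trunc c n (Psi_mm c) $ n = psi_weight n * (\<Sum>k=1..n. of_nat k * ttil c k * s (n - k))"
    unfolding A_trunc_def fps_sum_nth sum_distrib_left by (rule sum.cong[OF refl term_nth])
  also have "\<dots> = hbar * of_nat n * (s n * psi_weight n)"
    unfolding s_def ttil_schur_row_recurrence by (simp add: mult_ac)
  finally show "A_mm c (Psi_mm c) $ n = 0 $ n"
    by (simp add: A_mm_def D_op_def Psi_mm_nth s_def)
qed

lemma Bop_nth: "Bop j F $ n = (1 - hbar * of_nat n + hbar * of_nat j) * F $ n"
  by (cases n) (simp_all add: Bop_def xhat_def yhat_def algebra_simps)

lemma Bprod_Suc: "Bprod (Suc m) F = Bprod m (Bop (Suc m) F)"
proof -
  have foldr_comp: "foldr (\<circ>) fs g = foldr (\<circ>) fs id \<circ> g" for fs and g :: "'b \<Rightarrow> 'b"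
    by (induction fs) auto
  have "[1..<Suc m + 1] = [1..<m + 1] @ [Suc m]"
    by simp
  then show ?thesis
    unfolding Bprod_def by (simp only: map_append foldr_append) (simp add: foldr_comp[of _ "Bop (Suc m)"])
qed

definition Bprod_weight :: "nat \<Rightarrow> nat \<Rightarrow> 'a::field_char_0 fls" where
  "Bprod_weight m n = (\<Prod>j=1..m. 1 - hbar * of_nat n + hbar * of_nat j)"

lemma Bprod_nth: "Bprod m F $ n = Bprod_weight m n * F $ n"
proof (induction m arbitrary: F)
  case 0
  then show ?case by (simp add: Bprod_def Bprod_weight_def)
next
  case (Suc m)
  then show ?case by (simp add: Bprod_Suc Bop_nth Bprod_weight_def prod.cl_ivl_Suc mult_ac)
qed

lemma Bprod_weight_Suc_psi_weight:
  "Bprod_weight (Suc d) (Suc m) * psi_weight (Suc m) = Bprod_weight d m * psi_weight m"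
proof -
  have "Bprod_weight (Suc d) (Suc m)
        = (1 - hbar * of_nat (Suc m) + hbar) * (\<Prod>j=Suc 1..Suc d. 1 - hbar * of_nat (Suc m) + hbar * of_nat j)"
    unfolding Bprod_weight_def by (simp add: prod.atLeast_Suc_atMost)
  also have "(\<Prod>j=Suc 1..Suc d. 1 - hbar * of_nat (Suc m) + hbar * of_nat j)
             = (\<Prod>j=1..d. 1 - hbar * of_nat (Suc m) + hbar * of_nat (Suc j))"
    by (rule prod.shift_bounds_cl_Suc_ivl)
  also have "\<dots> = Bprod_weight d m"
    unfolding Bprod_weight_def by (rule prod.cong) (simp_all add: algebra_simps)
  finally have B: "Bprod_weight (Suc d) (Suc m) = (1 - hbar * of_nat m) * (Bprod_weight d m :: 'a fls)"
    by (simp add: algebra_simps)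
  have P: "psi_weight (Suc m) = psi_weight m * inverse (1 - hbar * of_nat m :: 'a fls)"
    by (simp add: psi_weight_def)
  show ?thesis
    unfolding B P using one_minus_hbar_of_nat_neq_0[of m, where 'a='a] by (simp add: field_simps)
qed

lemma Bprod_weight_shift_psi_weight:
  assumes "k \<le> n" "k \<le> l"
  shows "Bprod_weight (l - k) (n - k) * psi_weight (n - k) = Bprod_weight l n * psi_weight n"
  using assms
proof (induction k)
  case (Suc k)
  then have "n - k = Suc (n - Suc k)" "l - k = Suc (l - Suc k)"
    by auto
  with Suc show ?case
    by (metis Suc_leD Bprod_weight_Suc_psi_weight)
qed simp

lemma xhat_funpow: "(xhat ^^ k) F = fps_X ^ k * F"
  by (induction k) (simp_all add: xhat_def mult_ac)

lemma Atil_mm_Psi_mm: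
  fixes c :: "nat \<Rightarrow> 'a::field_char_0"
  assumes "\<forall>k>l. c k = 0"
  shows "Atil_mm c l (Psi_mm c) = 0"
proof (rule fps_ext)
  fix n
  define s where "s = schur_row (\<lambda>m. ttil c m / hbar)"
  define g where "g k = of_nat k * ttil c k * s (n - k)" for k
  define R where "R = Bprod_weight l n * (psi_weight n :: 'a fls)"
  have term_nth: "(fps_const (of_nat k * ttil c k) * (xhat ^^ k) (Bprod (l - k) (Psi_mm c))) $ n
      = (if k \<le> n then g k else 0) * R" if "k \<le> l" for k
  proof (cases "k \<le> n")
    case True
    then obtain m where n: "n = m + k"
      by (metis le_add_diff_inverse2)
    have "(fps_const (of_nat k * ttil c k) * (xhat ^^ k) (Bprod (l - k) (Psi_mm c))) $ n
          = of_nat k * ttil c k * s m * (Bprod_weight (l - k) m * psi_weight m)"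
      by (simp add: n xhat_funpow fps_X_power_mult_nth Bprod_nth Psi_mm_nth s_def mult_ac)
    also have "\<dots> = g k * R"
      using Bprod_weight_shift_psi_weight[of k n l, where 'a='a] True that by (simp add: n g_def R_def)
    finally show ?thesis
      using True by simp
  next
    case False
    then show ?thesis
      by (simp add: xhat_funpow fps_X_power_mult_nth)
  qed
  have "(\<Sum>k=1..l. if k \<le> n then g k else 0) = (\<Sum>k=1..n. g k)"
  proof -
    have "g k = 0" if "l < k" for k
      using assms that by (simp add: g_def ttil_def)
    then have "(\<Sum>k=1..l. if k \<le> n then g k else 0) = (\<Sum>k=1..n+l. if k \<le> n then g k else 0)"
      by (intro sum.mono_neutral_left) auto
    also have "\<dots> = (\<Sum>k=1..n. g k)"
      by (simp add: sum.inter_filter[symmetric]) (intro sum.cong; auto)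
    finally show ?thesis .
  qed
  moreover have "xhat (yhat (Bprod l (Psi_mm c))) $ n = - hbar * of_nat n * s n * R"
  proof -
    have "xhat (yhat (Bprod l (Psi_mm c))) = fps_const (- hbar) * (fps_X * fps_deriv (Bprod l (Psi_mm c)))"
      by (simp add: xhat_def yhat_def mult_ac)
    then show ?thesis
      by (simp only: fps_mult_left_const_nth fps_X_mult_deriv_nth Bprod_nth Psi_mm_nth R_def s_def)
         (simp add: mult_ac)
  qed
  moreover have "(\<Sum>k=1..l. fps_const (of_nat k * ttil c k) * (xhat ^^ k) (Bprod (l - k) (Psi_mm c))) $ n
                 = (\<Sum>k=1..l. if k \<le> n then g k else 0) * R"
    unfolding fps_sum_nth sum_distrib_right by (rule sum.cong[OF refl], rule term_nth) simp
  ultimately have "Atil_mm c l (Psi_mm c) $ n = (\<Sum>k=1..n. g k) * R - hbar * of_nat n * s n * R"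
    by (simp add: Atil_mm_def)
  then show "Atil_mm c l (Psi_mm c) $ n = 0 $ n"
    unfolding g_def s_def ttil_schur_row_recurrence by simp
qed

theorem mainTheorem6:
  fixes c :: "nat \<Rightarrow> 'a::field_char_0"
  shows "A_mm c (Psi_mm c) = 0 \<and>
         (\<forall>l. (\<forall>k>l. c k = 0) \<longrightarrow> Atil_mm c l (Psi_mm c) = 0)"
  using A_mm_Psi_mm Atil_mm_Psi_mm by blast

end
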